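(* Frame equivalence is not compositional in general: there exists a psi-calculus (satisfying all the requisites below) with frames $F,G,H$ such that $F\simeq G$ but not $F\otimes H\simeq G\otimes H$.
   Context: Names: a countably infinite set $\mathcal N$ of atomic names. A nominal set is a set equipped with name swapping operations $(a\;b)\cdot X$; the support $\mathrm n(X)$ is the set of names affected by swappings, assumed finite; $a\#X$ means $a\notin\mathrm n(X)$. Psi-calculus: given by three nominal datatypes $\mathbf T$ (terms), $\mathbf C$ (conditions, $\varphi$), $\mathbf A$ (assertions, $\Psi$), equivariant operators $\leftrightarrow:\mathbf T\times\mathbf T\to\mathbf C$, $\otimes:\mathbf A\times\mathbf A\to\mathbf A$, $\mathbf 1\in\mathbf A$, $\vdash\subseteq\mathbf A\times\mathbf C$, and equivariant substitution functions $X[\tilde a:=\tilde T]$ on $\mathbf T,\mathbf C,\mathbf A$ satisfying: (S1) if $\tilde a\subseteq\mathrm n(X)$ and $b\in\mathrm n(\tilde T)$ then $b\in\mathrm n(X[\tilde a:=\tilde T])$; (S2) if $\tilde b\# X,\tilde a$ then $X[\tilde a:=\tilde T]=((\tilde b\;\tilde a)\cdot X)[\tilde b:=\tilde T]$. $\Psi\simeq\Psi'$ iff for all $\varphi$: $\Psi\vdash\varphi\iff\Psi'\vdash\varphi$. Required: $\Psi\vdash M\leftrightarrow N\Rightarrow\Psi\vdash N\leftrightarrow M$; $\Psi\vdash M\leftrightarrow N\wedge\Psi\vdash N\leftrightarrow L\Rightarrow\Psi\vdash M\leftrightarrow L$; $\Psi\simeq\Psi'\Rightarrow\Psi\otimes\Psi''\simeq\Psi'\otimes\Psi''$;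 $\Psi\otimes\mathbf 1\simeq\Psi$; $(\Psi\otimes\Psi')\otimes\Psi''\simeq\Psi\otimes(\Psi'\otimes\Psi'')$; $\Psi\otimes\Psi'\simeq\Psi'\otimes\Psi$. Frames: $(\nu\tilde b)\Psi$ with the name sequence $\tilde b$ binding into $\Psi$, identified up to alpha-equivalence; $(\nu\tilde b_1)\Psi_1\otimes(\nu\tilde b_2)\Psi_2=(\nu\tilde b_1\tilde b_2)(\Psi_1\otimes\Psi_2)$ where $\tilde b_1\#\tilde b_2,\Psi_2$ and $\tilde b_2\#\tilde b_1,\Psi_1$; $F\vdash\varphi$ iff some alpha-variant $(\nu\tilde b)\Psi$ of $F$ has $\tilde b\#\varphi$ and $\Psi\vdash\varphi$; $F\simeq G$ iff for all $\varphi$, $F\vdash\varphi\iff G\vdash\varphi$; an assertion $\Psi$ is identified with the frame $(\nu\epsilon)\Psi$. *)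

theory Defs
  imports Main
begin

type_synonym name = nat

type_synonym 'x swapping = "name \<Rightarrow> name \<Rightarrow> 'x \<Rightarrow> 'x"

definition swp :: "name \<Rightarrow> name \<Rightarrow> name \<Rightarrow> name" where
  "swp a b c = (if c = a then b else if c = b then a else c)"

definition supp :: "'x swapping \<Rightarrow> 'x \<Rightarrow> name set" where
  "supp sw x = {a. infinite {b. sw a b x \<noteq> x}}"

definition supp_list :: "'x swapping \<Rightarrow> 'x list \<Rightarrow> name set" where
  "supp_list sw xs = (\<Union>x\<in>set xs. supp sw x)"

definition nominal_set :: "'x swapping \<Rightarrow> bool" where
  "nominal_set sw \<longleftrightarrow>
     (\<forall>a x. sw a a x = x) \<and>
     (\<forall>a b x. sw a b (sw a b x) = x) \<and>
     (\<forall>a b x. sw a b x = sw b a x) \<and>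
     (\<forall>a b c d x. sw a b (sw c d x) = sw (swp a b c) (swp a b d) (sw a b x)) \<and>
     (\<forall>x. finite (supp sw x))"

definition swap_seq :: "'x swapping \<Rightarrow> name list \<Rightarrow> name list \<Rightarrow> 'x \<Rightarrow> 'x" where
  "swap_seq sw bs as x = foldr (\<lambda>(b, a) y. sw b a y) (zip bs as) x"

record ('t, 'c, 'a) psi_data =
  swT :: "'t swapping"
  swC :: "'c swapping"
  swA :: "'a swapping"
  chan :: "'t \<Rightarrow> 't \<Rightarrow> 'c"
  comp :: "'a \<Rightarrow> 'a \<Rightarrow> 'a"
  unitA :: "'a"
  ent :: "'a \<Rightarrow> 'c \<Rightarrow> bool"
  substT :: "'t \<Rightarrow> name list \<Rightarrow> 't list \<Rightarrow> 't"
  substC :: "'c \<Rightarrow> name list \<Rightarrow> 't list \<Rightarrow> 'c"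
  substA :: "'a \<Rightarrow> name list \<Rightarrow> 't list \<Rightarrow> 'a"

definition subst_axioms ::
  "'t swapping \<Rightarrow> 'x swapping \<Rightarrow> ('x \<Rightarrow> name list \<Rightarrow> 't list \<Rightarrow> 'x) \<Rightarrow> bool" where
  "subst_axioms sT sX sub \<longleftrightarrow>
     (\<forall>a b X as Ts. sX a b (sub X as Ts) = sub (sX a b X) (map (swp a b) as) (map (sT a b) Ts)) \<and>
     (\<forall>X as Ts b. distinct as \<and> length as = length Ts \<and> set as \<subseteq> supp sX X
        \<and> b \<in> supp_list sT Ts \<longrightarrow> b \<in> supp sX (sub X as Ts)) \<and>
     (\<forall>X as bs Ts. distinct as \<and> distinct bs \<and> length as = length Ts \<and> length bs = length as
        \<and> set bs \<inter> (supp sX X \<union> set as) = {}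
        \<longrightarrow> sub X as Ts = sub (swap_seq sX bs as X) bs Ts)"

definition assn_equiv :: "('t, 'c, 'a) psi_data \<Rightarrow> 'a \<Rightarrow> 'a \<Rightarrow> bool" where
  "assn_equiv P \<Psi> \<Psi>' \<longleftrightarrow> (\<forall>\<phi>. ent P \<Psi> \<phi> \<longleftrightarrow> ent P \<Psi>' \<phi>)"

definition psi_calculus :: "('t, 'c, 'a) psi_data \<Rightarrow> bool" where
  "psi_calculus P \<longleftrightarrow>
     nominal_set (swT P) \<and> nominal_set (swC P) \<and> nominal_set (swA P) \<and>
     (\<forall>a b M N. swC P a b (chan P M N) = chan P (swT P a b M) (swT P a b N)) \<and>
     (\<forall>a b \<Psi> \<Psi>'. swA P a b (comp P \<Psi> \<Psi>') = comp P (swA P a b \<Psi>) (swA P a b \<Psi>')) \<and>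
     (\<forall>a b. swA P a b (unitA P) = unitA P) \<and>
     (\<forall>a b \<Psi> \<phi>. ent P \<Psi> \<phi> \<longleftrightarrow> ent P (swA P a b \<Psi>) (swC P a b \<phi>)) \<and>
     subst_axioms (swT P) (swT P) (substT P) \<and>
     subst_axioms (swT P) (swC P) (substC P) \<and>
     subst_axioms (swT P) (swA P) (substA P) \<and>
     (\<forall>\<Psi> M N. ent P \<Psi> (chan P M N) \<longrightarrow> ent P \<Psi> (chan P N M)) \<and>
     (\<forall>\<Psi> M N L. ent P \<Psi> (chan P M N) \<and> ent P \<Psi> (chan P N L) \<longrightarrow> ent P \<Psi> (chan P M L)) \<and>
     (\<forall>\<Psi> \<Psi>' \<Psi>''. assn_equiv P \<Psi> \<Psi>' \<longrightarrow> assn_equiv P (comp P \<Psi> \<Psi>'') (comp P \<Psi>' \<Psi>'')) \<and>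
     (\<forall>\<Psi>. assn_equiv P (comp P \<Psi> (unitA P)) \<Psi>) \<and>
     (\<forall>\<Psi> \<Psi>' \<Psi>''. assn_equiv P (comp P (comp P \<Psi> \<Psi>') \<Psi>'') (comp P \<Psi> (comp P \<Psi>' \<Psi>''))) \<and>
     (\<forall>\<Psi> \<Psi>'. assn_equiv P (comp P \<Psi> \<Psi>') (comp P \<Psi>' \<Psi>))"

text \<open>A frame (nu bs) Psi is represented by the pair (bs, Psi); bs is a sequence of
  nested binders (nu b1)(nu b2)...(nu bn) Psi. Frames are identified up to
  alpha-equivalence, generated by renaming one binder b to a name c that is fresh
  for the abstraction body (nu rest) Psi.\<close>
type_synonym 'a frame = "name list \<times> 'a"

definition alpha_step :: "'a swapping \<Rightarrow> 'a frame \<Rightarrow> 'a frame \<Rightarrow> bool" where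
  "alpha_step sA F F' \<longleftrightarrow>
     (\<exists>pre b rest c. fst F = pre @ b # rest \<and> c \<notin> supp sA (snd F) - set rest \<and>
        F' = (pre @ c # map (swp c b) rest, sA c b (snd F)))"

definition frame_alpha :: "'a swapping \<Rightarrow> 'a frame \<Rightarrow> 'a frame \<Rightarrow> bool" where
  "frame_alpha sA = equivclp (alpha_step sA)"

definition frame_ent :: "('t, 'c, 'a) psi_data \<Rightarrow> 'a frame \<Rightarrow> 'c \<Rightarrow> bool" where
  "frame_ent P F \<phi> \<longleftrightarrow>
     (\<exists>bs \<Psi>. frame_alpha (swA P) F (bs, \<Psi>) \<and> set bs \<inter> supp (swC P) \<phi> = {} \<and> ent P \<Psi> \<phi>)"

definition frame_equiv :: "('t, 'c, 'a) psi_data \<Rightarrow> 'a frame \<Rightarrow> 'a frame \<Rightarrow> bool" where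
  "frame_equiv P F G \<longleftrightarrow> (\<forall>\<phi>. frame_ent P F \<phi> \<longleftrightarrow> frame_ent P G \<phi>)"

definition frame_comp_ok :: "('t, 'c, 'a) psi_data \<Rightarrow> 'a frame \<Rightarrow> 'a frame \<Rightarrow> bool" where
  "frame_comp_ok P F G \<longleftrightarrow>
     set (fst F) \<inter> set (fst G) = {} \<and>
     set (fst F) \<inter> supp (swA P) (snd G) = {} \<and>
     set (fst G) \<inter> supp (swA P) (snd F) = {}"

definition frame_comp :: "('t, 'c, 'a) psi_data \<Rightarrow> 'a frame \<Rightarrow> 'a frame \<Rightarrow> 'a frame" where
  "frame_comp P F G = (fst F @ fst G, comp P (snd F) (snd G))"

end

theory Submission
  imports Defs
begin

(* We build a psi-calculus whose terms,
   conditions and assertions are all finite lists of names, acted on pointwise by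
   swappings, with composition = concatenation, unit = [], every channel
   equivalence M <-> N equal to [], and entailment
     Psi |- phi  iff  (phi nonempty and set phi = set Psi) or (phi = [] and Psi
                      mentions at least two distinct names).
   So Psi |- M <-> N just says "Psi has two names", and assertion equivalence
   is equality of the name sets, which makes all psi-calculus laws easy.
   Alpha-conversion of a frame preserves its free names and the number of names in
   its body; hence a frame all of whose names are bound and whose body mentions
   fewer than two names entails nothing.  This makes (nu 0)[0] and (nu)[] equivalent,
   whereas after composing with (nu 1)[1] the first becomes (nu 0 1)[0,1], which
   entails [], and the second stays silent. *)

definition swap_names :: "name list swapping" where
  "swap_names a b xs = map (swp a b) xs"

lemma swp_involutive [simp]: "swp a b (swp a b x) = x"
  by (simp add: swp_def)

lemma inj_swp: "inj (swp a b)"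
  by (metis injI swp_involutive)

lemma swp_same: "swp a a = id"
  by (auto simp: swp_def)

lemma swp_commute: "swp a b = swp b a"
  by (auto simp: swp_def)

lemma swp_conjugate: "swp a b (swp c d y) = swp (swp a b c) (swp a b d) (swp a b y)"
  unfolding swp_def by (simp split: if_split)

lemma swap_names_fresh: "a \<notin> set xs \<Longrightarrow> b \<notin> set xs \<Longrightarrow> swap_names a b xs = xs"
  unfolding swap_names_def by (rule map_idI) (auto simp: swp_def)

text \<open>The support of a name list is the set of names occurring in it: a name outside
  the list can only be moved by swapping it with names of the list, while a name in the
  list is moved by every swapping with one of the infinitely many names outside it.\<close>
lemma supp_swap_names: "supp swap_names xs = set xs"
proof (rule set_eqI, rule iffI)
  fix a assume "a \<in> supp swap_names xs"
  hence moved: "infinite {b. swap_names a b xs \<noteq> xs}" by (simp add: supp_def)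
  show "a \<in> set xs"
  proof (rule ccontr)
    assume "a \<notin> set xs"
    hence "{b. swap_names a b xs \<noteq> xs} \<subseteq> set xs"
      using swap_names_fresh[of a xs] by blast
    thus False using moved finite_subset by blast
  qed
next
  fix a assume a: "a \<in> set xs"
  have "- set xs \<subseteq> {b. swap_names a b xs \<noteq> xs}"
  proof
    fix b assume "b \<in> - set xs"
    moreover have "b \<in> set (swap_names a b xs)"
      using a by (force simp: swap_names_def swp_def)
    ultimately show "b \<in> {b. swap_names a b xs \<noteq> xs}" by auto
  qed
  moreover have "infinite (- set xs)"
    using finite_compl[of "set xs"] infinite_UNIV_nat by auto
  ultimately show "a \<in> supp swap_names xs"
    unfolding supp_def using infinite_super by blast
qed

lemma nominal_swap_names: "nominal_set swap_names"
proof -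
  have same: "swap_names a a xs = xs" for a xs
    by (simp add: swap_names_def swp_same)
  have involutive: "swap_names a b (swap_names a b xs) = xs" for a b xs
    unfolding swap_names_def by (induction xs) simp_all
  have commute: "swap_names a b xs = swap_names b a xs" for a b xs
    unfolding swap_names_def by (simp add: swp_commute[of a b])
  have conjugate: "swap_names a b (swap_names c d xs)
      = swap_names (swp a b c) (swp a b d) (swap_names a b xs)" for a b c d xs
    unfolding swap_names_def by (induction xs) (simp_all add: swp_conjugate[of a b c d])
  show ?thesis
    unfolding nominal_set_def supp_swap_names
    by (intro conjI allI same involutive commute conjugate finite_set)
qed

definition subst_concat :: "name list \<Rightarrow> name list \<Rightarrow> name list list \<Rightarrow> name list" where
  "subst_concat X as Ts = concat Ts"

lemma subst_axioms_concat: "subst_axioms swap_names swap_names subst_concat"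
  unfolding subst_axioms_def subst_concat_def supp_list_def supp_swap_names
  by (auto simp: swap_names_def[abs_def] map_concat)

definition ent_names :: "name list \<Rightarrow> name list \<Rightarrow> bool" where
  "ent_names \<Psi> \<phi> \<longleftrightarrow> (\<phi> \<noteq> [] \<and> set \<phi> = set \<Psi>) \<or> (\<phi> = [] \<and> 2 \<le> card (set \<Psi>))"

definition PsiNames :: "(name list, name list, name list) psi_data" where
  "PsiNames = \<lparr>swT = swap_names, swC = swap_names, swA = swap_names, chan = (\<lambda>M N. []),
     comp = (@), unitA = [], ent = ent_names,
     substT = subst_concat, substC = subst_concat, substA = subst_concat\<rparr>"

lemma PsiNames_simps [simp]:
  "swA PsiNames = swap_names" "swC PsiNames = swap_names"
  "ent PsiNames = ent_names" "comp PsiNames = (@)"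
  by (simp_all add: PsiNames_def)

text \<open>Entailment is equivariant because swappings are injective on names.\<close>
lemma ent_names_equivariant:
  "ent_names \<Psi> \<phi> \<longleftrightarrow> ent_names (swap_names a b \<Psi>) (swap_names a b \<phi>)"
proof -
  have "(swp a b ` set \<phi> = swp a b ` set \<Psi>) = (set \<phi> = set \<Psi>)"
    by (rule inj_image_eq_iff[OF inj_swp])
  moreover have "card (swp a b ` set \<Psi>) = card (set \<Psi>)"
    by (rule card_image[OF inj_on_subset[OF inj_swp subset_UNIV]])
  ultimately show ?thesis by (simp add: ent_names_def swap_names_def)
qed

text \<open>Assertion equivalence is exactly equality of name sets: the forward direction
  tests the two assertions on themselves.\<close>
lemma assn_equiv_PsiNames: "assn_equiv PsiNames \<Psi> \<Psi>' \<longleftrightarrow> set \<Psi> = set \<Psi>'"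
proof
  assume "assn_equiv PsiNames \<Psi> \<Psi>'"
  hence "ent_names \<Psi> \<Psi> = ent_names \<Psi>' \<Psi>" "ent_names \<Psi> \<Psi>' = ent_names \<Psi>' \<Psi>'"
    by (auto simp: assn_equiv_def)
  thus "set \<Psi> = set \<Psi>'" by (auto simp: ent_names_def)
qed (simp add: assn_equiv_def ent_names_def)

text \<open>All requisites hold: by the previous lemma the assertion laws reduce to
  set identities for concatenation, and the channel laws are trivial since
  every channel equivalence is the same condition.\<close>
theorem psi_calculus_PsiNames: "psi_calculus PsiNames"
proof -
  have "\<forall>a b \<Psi> \<phi>. ent_names \<Psi> \<phi> \<longleftrightarrow> ent_names (swap_names a b \<Psi>) (swap_names a b \<phi>)"
    using ent_names_equivariant by blast
  then show ?thesis
    unfolding psi_calculus_def assn_equiv_PsiNames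
    using nominal_swap_names subst_axioms_concat
    by (auto simp: PsiNames_def swap_names_def)
qed

definition frame_free_names :: "name list frame \<Rightarrow> name set" where
  "frame_free_names F = set (snd F) - set (fst F)"

text \<open>Renaming a binder to a fresh name preserves the free names and, since the
  swapping is injective, the number of names in the body.\<close>
lemma alpha_step_invariants:
  assumes "alpha_step swap_names F F'"
  shows "frame_free_names F' = frame_free_names F \<and> card (set (snd F')) = card (set (snd F))"
proof -
  obtain pre b rest c where F: "fst F = pre @ b # rest"
    and c: "c \<notin> set (snd F) - set rest"
    and F': "F' = (pre @ c # map (swp c b) rest, map (swp c b) (snd F))"
    using assms unfolding alpha_step_def supp_swap_names swap_names_def by blast
  have "card (set (snd F')) = card (set (snd F))"
    using F' card_image[OF inj_on_subset[OF inj_swp subset_UNIV]] by simp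
  moreover have "frame_free_names F' = frame_free_names F"
    using c unfolding frame_free_names_def F' F by (auto simp: swp_def split: if_splits)
  ultimately show ?thesis by simp
qed

lemma frame_alpha_invariants:
  assumes "frame_alpha swap_names F F'"
  shows "frame_free_names F' = frame_free_names F \<and> card (set (snd F')) = card (set (snd F))"
  using assms unfolding frame_alpha_def
proof (induction rule: equivclp_induct)
  case (step y z)
  then show ?case using alpha_step_invariants by metis
qed simp

text \<open>A closed frame whose body mentions fewer than two names entails nothing: a
  nonempty condition would have to consist of bound names, and the empty one needs
  two names.\<close>
lemma closed_small_frame_silent:
  assumes closed: "set (snd F) \<subseteq> set (fst F)" and small: "card (set (snd F)) < 2"
  shows "\<not> frame_ent PsiNames F \<phi>"
proof
  assume "frame_ent PsiNames F \<phi>"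
  then obtain bs \<Psi> where alpha: "frame_alpha swap_names F (bs, \<Psi>)"
    and fresh: "set bs \<inter> set \<phi> = {}" and ent: "ent_names \<Psi> \<phi>"
    unfolding frame_ent_def by (auto simp: supp_swap_names)
  from frame_alpha_invariants[OF alpha]
  have free: "set \<Psi> - set bs = set (snd F) - set (fst F)"
    and size: "card (set \<Psi>) = card (set (snd F))"
    by (simp_all add: frame_free_names_def)
  have bound: "set \<Psi> \<subseteq> set bs" using free closed by auto
  have few: "card (set \<Psi>) < 2" using size small by simp
  from ent consider "\<phi> \<noteq> []" "set \<phi> = set \<Psi>" | "2 \<le> card (set \<Psi>)"
    unfolding ent_names_def by blast
  then show False
  proof cases
    case 1
    then have "set \<phi> \<subseteq> set bs \<inter> set \<phi>" using bound by simp
    then have "set \<phi> = {}" using fresh by simp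
    with \<open>\<phi> \<noteq> []\<close> show False by simp
  next
    case 2
    then show False using few by simp
  qed
qed

theorem mainTheorem10:
  shows "\<exists>P :: (name list, name list, name list) psi_data. psi_calculus P \<and>
    (\<exists>F G H. frame_comp_ok P F H \<and> frame_comp_ok P G H \<and>
       frame_equiv P F G \<and> \<not> frame_equiv P (frame_comp P F H) (frame_comp P G H))"
proof (intro exI conjI)
  let ?F = "([0], [0])" and ?G = "([], [])" and ?H = "([1], [1])"
  show "psi_calculus PsiNames" by (rule psi_calculus_PsiNames)
  show "frame_comp_ok PsiNames ?F ?H" "frame_comp_ok PsiNames ?G ?H"
    by (simp_all add: frame_comp_ok_def supp_swap_names)
  show "frame_equiv PsiNames ?F ?G"
    unfolding frame_equiv_def
    using closed_small_frame_silent[of ?F] closed_small_frame_silent[of ?G] by simp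
  have "frame_ent PsiNames (frame_comp PsiNames ?F ?H) []"
    unfolding frame_ent_def frame_comp_def frame_alpha_def
    by (rule exI[of _ "[0, 1]"], rule exI[of _ "[0, 1]"]) (simp add: supp_swap_names ent_names_def)
  moreover have "\<not> frame_ent PsiNames (frame_comp PsiNames ?G ?H) []"
    by (rule closed_small_frame_silent) (simp_all add: frame_comp_def)
  ultimately show "\<not> frame_equiv PsiNames (frame_comp PsiNames ?F ?H) (frame_comp PsiNames ?G ?H)"
    unfolding frame_equiv_def by blast
qed

end
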